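(* Let $A:\Omega^+\to\mathbb{R}$ be Lipschitz, $W$ a Lipschitz involution kernel for $A$ with associated $A^-:\Omega^-\to\mathbb{R}$. Let $\mu$ be any equilibrium probability on $\Omega^+$, $\hat\mu$ its unique $\hat\sigma$-invariant extension to $\hat\Omega$ and $\mu^-$ the marginal of $\hat\mu$ on $\Omega^-$. Then \[(1)\ \int A\,d\mu=\int A^-\,d\mu^-,\qquad (2)\ \int A^-\circ\theta^{-1}\,d\mu=\int A\circ\theta\,d\mu^-.\]
   Context: $(M,d)$ is a compact metric space; $\Omega^+=M^{\mathbb{N}}$ with points $x=|x_1,x_2,\dots)$, $\Omega^-=M^{\mathbb{N}}$ with points $y=(\dots,y_2,y_1|$; $\hat\Omega=\Omega^-\times\Omega^+$ with $\hat\sigma(\dots,y_2,y_1|x_1,x_2,\dots)=(\dots,y_2,y_1,x_1|x_2,\dots)$. $\theta:\Omega^-\to\Omega^+$, $\theta(\dots,z_2,z_1|)=|z_1,z_2,\dots)$. A shift-invariant probability $\mu$ on $\Omega^+$ is an equilibrium probability if there exist a Borel probability $\nu$ on $M$ with $\operatorname{supp}\nu=M$ and a Lipschitz $B:\Omega^+\to\mathbb{R}$ with $\int e^{B(|a,x_1,x_2,\dots))}d\nu(a)=1$ for all $x$ such that $\int\!\int e^{B(|a,x))}f(|a,x))\,d\nu(a)\,d\mu(x)=\int f\,d\mu$ for all continuous $f$. Its $\hat\sigma$-invariant extension is the unique $\hat\sigma$-invariant probability on $\hat\Omega$ with marginal $\mu$ on $\Omega^+$. A Lipschitz $W:\hat\Omega\to\mathbb{R}$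 is an involution kernel for $A$ if $A^-:=A\circ\hat\sigma^{-1}+W\circ\hat\sigma^{-1}-W$ does not depend on $x$, i.e. $A^-(y)=A(|y_1,x_1,x_2,\dots))+W(\dots,y_3,y_2|y_1,x_1,\dots)-W(\dots,y_2,y_1|x_1,\dots)$; $A^-$ is viewed as a function on $\Omega^-$. *)

theory Defs
  imports "HOL-Analysis.Analysis" "HOL-Probability.Probability"
begin

text \<open>Points of Omega+ = M^N are functions x :: nat => 'm with x 0 = x_1, x 1 = x_2, ...
 Points of Omega- are functions y :: nat => 'm with y 0 = y_1, y 1 = y_2, ...
 Omega-hat = Omega- x Omega+, a pair (y, x).\<close>

definition seq_dist :: "(nat \<Rightarrow> 'm::metric_space) \<Rightarrow> (nat \<Rightarrow> 'm) \<Rightarrow> real" where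
  "seq_dist x z = (\<Sum>n. (1/2)^(Suc n) * dist (x n) (z n))"

definition hat_dist :: "(nat \<Rightarrow> 'm::metric_space) \<times> (nat \<Rightarrow> 'm) \<Rightarrow> (nat \<Rightarrow> 'm) \<times> (nat \<Rightarrow> 'm) \<Rightarrow> real" where
  "hat_dist p q = seq_dist (fst p) (fst q) + seq_dist (snd p) (snd q)"

definition seq_lipschitz :: "((nat \<Rightarrow> 'm::metric_space) \<Rightarrow> real) \<Rightarrow> bool" where
  "seq_lipschitz f \<longleftrightarrow> (\<exists>C. \<forall>x z. \<bar>f x - f z\<bar> \<le> C * seq_dist x z)"

definition hat_lipschitz :: "((nat \<Rightarrow> 'm::metric_space) \<times> (nat \<Rightarrow> 'm) \<Rightarrow> real) \<Rightarrow> bool" where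
  "hat_lipschitz f \<longleftrightarrow> (\<exists>C. \<forall>p q. \<bar>f p - f q\<bar> \<le> C * hat_dist p q)"

definition scons :: "'m \<Rightarrow> (nat \<Rightarrow> 'm) \<Rightarrow> (nat \<Rightarrow> 'm)" where
  "scons a x = (\<lambda>n. case n of 0 \<Rightarrow> a | Suc k \<Rightarrow> x k)"

definition shift :: "(nat \<Rightarrow> 'm) \<Rightarrow> (nat \<Rightarrow> 'm)" where
  "shift x = (\<lambda>n. x (Suc n))"

text \<open>sigma-hat (..,y2,y1|x1,x2,..) = (..,y2,y1,x1|x2,..)\<close>
definition sigma_hat :: "(nat \<Rightarrow> 'm) \<times> (nat \<Rightarrow> 'm) \<Rightarrow> (nat \<Rightarrow> 'm) \<times> (nat \<Rightarrow> 'm)" where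
  "sigma_hat p = (scons (snd p 0) (fst p), shift (snd p))"

text \<open>theta(..,z2,z1|) = |z1,z2,..): with our indexing it is the identity map\<close>
definition theta :: "(nat \<Rightarrow> 'm) \<Rightarrow> (nat \<Rightarrow> 'm)" where
  "theta y = (\<lambda>n. y n)"

definition msupport :: "'m::topological_space measure \<Rightarrow> 'm set" where
  "msupport \<nu> = {a. \<forall>U. open U \<longrightarrow> a \<in> U \<longrightarrow> emeasure \<nu> U > 0}"

definition equilibrium_prob :: "(nat \<Rightarrow> 'm::metric_space) measure \<Rightarrow> bool" where
  "equilibrium_prob \<mu> \<longleftrightarrow>
     prob_space \<mu> \<and> sets \<mu> = sets borel \<and> distr \<mu> borel shift = \<mu> \<and>
     (\<exists>(\<nu>::'m measure) B. prob_space \<nu> \<and> sets \<nu> = sets borel \<and> msupport \<nu> = UNIV \<and>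
        seq_lipschitz B \<and>
        (\<forall>x. (\<integral>a. exp (B (scons a x)) \<partial>\<nu>) = 1) \<and>
        (\<forall>f::(nat \<Rightarrow> 'm) \<Rightarrow> real. continuous_on UNIV f \<longrightarrow>
           (\<integral>x. (\<integral>a. exp (B (scons a x)) * f (scons a x) \<partial>\<nu>) \<partial>\<mu>) = (\<integral>x. f x \<partial>\<mu>)))"

text \<open>hat-sigma-invariant extension of mu: a sigma-hat-invariant probability on Omega-hat with
  marginal mu on Omega+ (unique by the paper)\<close>
definition invariant_extension ::
  "(nat \<Rightarrow> 'm::metric_space) measure \<Rightarrow> ((nat \<Rightarrow> 'm) \<times> (nat \<Rightarrow> 'm)) measure \<Rightarrow> bool" where
  "invariant_extension \<mu> \<mu>h \<longleftrightarrow>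
     prob_space \<mu>h \<and> sets \<mu>h = sets borel \<and> distr \<mu>h borel sigma_hat = \<mu>h \<and>
     distr \<mu>h borel snd = \<mu>"

text \<open>W is an involution kernel for A with associated A^- (viewed as a function on Omega-):
  A^-(y) = A(y1 x) + W(sigma-hat^{-1}(y,x)) - W(y,x), independent of x.\<close>
definition involution_kernel ::
  "((nat \<Rightarrow> 'm::metric_space) \<Rightarrow> real) \<Rightarrow> ((nat \<Rightarrow> 'm) \<times> (nat \<Rightarrow> 'm) \<Rightarrow> real) \<Rightarrow> ((nat \<Rightarrow> 'm) \<Rightarrow> real) \<Rightarrow> bool" where
  "involution_kernel A W Am \<longleftrightarrow> hat_lipschitz W \<and>
     (\<forall>y x. Am y = A (scons (y 0) x) + W (shift y, scons (y 0) x) - W (y, x))"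

end

theory Submission
  imports Defs
begin

text \<open>
  Evaluated at \<open>\<hat>\<sigma>\<^sup>-\<^sup>1 (y, x)\<close>, the defining equation of the involution kernel says
  that \<open>A\<^sup>- \<circ> fst\<close> and \<open>A \<circ> snd \<circ> \<hat>\<sigma>\<^sup>-\<^sup>1\<close> differ by the coboundary
  \<open>W \<circ> \<hat>\<sigma>\<^sup>-\<^sup>1 - W\<close>, and the \<open>\<hat>\<sigma>\<close>-invariance of \<open>\<hat>\<mu>\<close> is also invariance under
  \<open>\<hat>\<sigma>\<^sup>-\<^sup>1\<close>; integrating against \<open>\<hat>\<mu>\<close> gives (1). Applying the same equation to
  \<open>\<hat>\<sigma>\<^sup>-\<^sup>1\<close> of the swapped point gives (2) in the same way; \<open>\<theta>\<close> is the identity in this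
  encoding. Compactness bounds the metric of \<open>M\<close> by some \<open>D\<close>; since \<open>seq_dist\<close> is within
  \<open>D 2\<^sup>-\<^sup>N\<close> of a function of the first \<open>N\<close> coordinates, the Lipschitz functions \<open>A\<close> and
  \<open>W\<close> are bounded and continuous for the product topology, hence integrable.
\<close>

lemma summable_seq_dist_terms:
  fixes x z :: "nat \<Rightarrow> 'm::metric_space"
  assumes D: "\<And>a b::'m. dist a b \<le> D"
  shows "summable (\<lambda>n. (1/2::real)^Suc n * dist (x n) (z n))"
proof (rule summable_comparison_test')
  show "summable (\<lambda>n. D * (1/2::real)^Suc n)"
    using power_half_series by (intro summable_mult) (rule sums_summable)
  show "norm ((1/2::real)^Suc n * dist (x n) (z n)) \<le> D * (1/2)^Suc n" for n
    using D[of "x n" "z n"] by (simp add: mult.commute mult_left_mono)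
qed

lemma seq_dist_nonneg:
  fixes x z :: "nat \<Rightarrow> 'm::metric_space"
  assumes "\<And>a b::'m. dist a b \<le> D"
  shows "0 \<le> seq_dist x z"
  unfolding seq_dist_def by (intro suminf_nonneg summable_seq_dist_terms[OF assms]) simp

lemma seq_dist_le_initial_sum:
  fixes x z :: "nat \<Rightarrow> 'm::metric_space"
  assumes D: "\<And>a b::'m. dist a b \<le> D"
  shows "seq_dist x z \<le> (\<Sum>n<N. dist (x n) (z n)) + D * (1/2)^N"
proof -
  define f where "f n = (1/2::real)^Suc n * dist (x n) (z n)" for n
  have f: "summable f"
    unfolding f_def by (rule summable_seq_dist_terms[OF D])
  have half: "(\<lambda>n. D * (1/2)^N * (1/2::real)^Suc n) sums (D * (1/2)^N)"
    using sums_mult[OF power_half_series, of "D * (1/2)^N"] by simp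
  have "seq_dist x z = (\<Sum>n. f (n + N)) + (\<Sum>n<N. f n)"
    unfolding seq_dist_def f_def[symmetric] by (rule suminf_split_initial_segment[OF f])
  also have "(\<Sum>n. f (n + N)) \<le> D * (1/2)^N"
  proof (rule sums_le[OF _ summable_sums half])
    show "f (n + N) \<le> D * (1/2)^N * (1/2)^Suc n" for n
      using D[of "x (n + N)" "z (n + N)"]
      by (simp add: f_def power_add mult_left_mono mult.commute mult.left_commute)
    show "summable (\<lambda>n. f (n + N))"
      using f by simp
  qed
  also have "(\<Sum>n<N. f n) \<le> (\<Sum>n<N. dist (x n) (z n))"
    unfolding f_def by (intro sum_mono mult_left_le_one_le power_le_one) simp_all
  finally show ?thesis by simp
qed

lemma seq_dist_le:
  fixes x z :: "nat \<Rightarrow> 'm::metric_space"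
  assumes "\<And>a b::'m. dist a b \<le> D"
  shows "seq_dist x z \<le> D"
  using seq_dist_le_initial_sum[OF assms, of x z 0] by simp

lemma tendsto_seq_dist:
  fixes g :: "'a \<Rightarrow> nat \<Rightarrow> 'm::metric_space"
  assumes D: "\<And>a b::'m. dist a b \<le> D" and g: "(g \<longlongrightarrow> x) F"
  shows "((\<lambda>t. seq_dist (g t) x) \<longlongrightarrow> 0) F"
proof (rule tendstoI)
  fix e :: real assume "0 < e"
  have "(\<lambda>N. D * (1/2::real)^N) \<longlonglongrightarrow> 0"
    by (intro tendsto_mult_right_zero LIMSEQ_power_zero) simp
  then obtain N where N: "D * (1/2)^N < e/2"
    using order_tendstoD(2)[of _ 0 sequentially "e/2"] \<open>0 < e\<close>
    by (auto simp: eventually_sequentially)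
  have "((\<lambda>t. g t n) \<longlongrightarrow> x n) F" for n
    using continuous_on_tendsto_compose[OF continuous_on_product_coordinates g] by simp
  then have "((\<lambda>t. dist (g t n) (x n)) \<longlongrightarrow> 0) F" for n
    using tendsto_dist[OF _ tendsto_const, of "\<lambda>t. g t n" "x n" F "x n"] by simp
  then have "((\<lambda>t. \<Sum>n<N. dist (g t n) (x n)) \<longlongrightarrow> 0) F"
    by (rule tendsto_null_sum)
  then have "\<forall>\<^sub>F t in F. (\<Sum>n<N. dist (g t n) (x n)) < e/2"
    using \<open>0 < e\<close> by (intro order_tendstoD(2)) (auto intro: half_gt_zero)
  then show "\<forall>\<^sub>F t in F. dist (seq_dist (g t) x) 0 < e"
  proof (rule eventually_mono)
    fix t assume "(\<Sum>n<N. dist (g t n) (x n)) < e/2"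
    then show "dist (seq_dist (g t) x) 0 < e"
      using seq_dist_le_initial_sum[OF D, of "g t" x N] seq_dist_nonneg[OF D, of "g t" x] N
      by simp
  qed
qed

lemma continuous_on_if_lipschitz_gauge:
  fixes f :: "'a::topological_space \<Rightarrow> real"
  assumes lip: "\<And>x z. \<bar>f x - f z\<bar> \<le> C * d x z"
    and gauge: "\<And>x. ((\<lambda>z. d z x) \<longlongrightarrow> 0) (at x)"
  shows "continuous_on UNIV f"
  unfolding continuous_on_def
proof (intro ballI)
  fix x
  have "((\<lambda>z. C * d z x) \<longlongrightarrow> 0) (at x)"
    using tendsto_mult[OF tendsto_const gauge[of x], of C] by simp
  moreover have "\<forall>\<^sub>F z in at x. norm (f z - f x) \<le> C * d z x"
    using lip by (simp add: always_eventually)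
  ultimately have "((\<lambda>z. f z - f x) \<longlongrightarrow> 0) (at x)"
    by (rule Lim_null_comparison[rotated])
  then show "(f \<longlongrightarrow> f x) (at x within UNIV)"
    by (simp add: LIM_zero_iff)
qed

lemma bounded_range_if_lipschitz_gauge:
  fixes f :: "'a \<Rightarrow> real"
  assumes lip: "\<And>x z. \<bar>f x - f z\<bar> \<le> C * d x z"
    and nonneg: "\<And>x z. 0 \<le> d x z" and le: "\<And>x z. d x z \<le> K"
  shows "bounded (range f)"
proof -
  have "\<bar>f x\<bar> \<le> \<bar>f z\<bar> + \<bar>C\<bar> * K" for x z
  proof -
    have "C * d x z \<le> \<bar>C\<bar> * d x z"
      by (rule mult_right_mono[OF abs_ge_self nonneg])
    also have "\<dots> \<le> \<bar>C\<bar> * K"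
      by (rule mult_left_mono[OF le abs_ge_zero])
    finally show ?thesis
      using lip[of x z] by linarith
  qed
  then show ?thesis
    unfolding bounded_real by blast
qed

lemma seq_lipschitz_continuous:
  fixes f :: "(nat \<Rightarrow> 'm::metric_space) \<Rightarrow> real"
  assumes D: "\<And>a b::'m. dist a b \<le> D" and "seq_lipschitz f"
  shows "continuous_on UNIV f"
proof -
  obtain C where "\<And>x z. \<bar>f x - f z\<bar> \<le> C * seq_dist x z"
    using \<open>seq_lipschitz f\<close> by (auto simp: seq_lipschitz_def)
  then show ?thesis
    by (rule continuous_on_if_lipschitz_gauge) (rule tendsto_seq_dist[OF D tendsto_ident_at])
qed

lemma seq_lipschitz_bounded:
  fixes f :: "(nat \<Rightarrow> 'm::metric_space) \<Rightarrow> real"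
  assumes D: "\<And>a b::'m. dist a b \<le> D" and "seq_lipschitz f"
  shows "bounded (range f)"
proof -
  obtain C where "\<And>x z. \<bar>f x - f z\<bar> \<le> C * seq_dist x z"
    using \<open>seq_lipschitz f\<close> by (auto simp: seq_lipschitz_def)
  then show ?thesis
    by (rule bounded_range_if_lipschitz_gauge) (rule seq_dist_nonneg[OF D], rule seq_dist_le[OF D])
qed

lemma hat_lipschitz_continuous:
  fixes f :: "(nat \<Rightarrow> 'm::metric_space) \<times> (nat \<Rightarrow> 'm) \<Rightarrow> real"
  assumes D: "\<And>a b::'m. dist a b \<le> D" and "hat_lipschitz f"
  shows "continuous_on UNIV f"
proof -
  obtain C where "\<And>p q. \<bar>f p - f q\<bar> \<le> C * hat_dist p q"
    using \<open>hat_lipschitz f\<close> by (auto simp: hat_lipschitz_def)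
  moreover have "((\<lambda>q. hat_dist q p) \<longlongrightarrow> 0) (at p)" for p :: "(nat \<Rightarrow> 'm) \<times> (nat \<Rightarrow> 'm)"
    unfolding hat_dist_def
    by (rule tendsto_add_zero[OF tendsto_seq_dist[OF D tendsto_fst[OF tendsto_ident_at]]
          tendsto_seq_dist[OF D tendsto_snd[OF tendsto_ident_at]]])
  ultimately show ?thesis
    by (rule continuous_on_if_lipschitz_gauge)
qed

lemma hat_lipschitz_bounded:
  fixes f :: "(nat \<Rightarrow> 'm::metric_space) \<times> (nat \<Rightarrow> 'm) \<Rightarrow> real"
  assumes D: "\<And>a b::'m. dist a b \<le> D" and "hat_lipschitz f"
  shows "bounded (range f)"
proof -
  obtain C where "\<And>p q. \<bar>f p - f q\<bar> \<le> C * hat_dist p q"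
    using \<open>hat_lipschitz f\<close> by (auto simp: hat_lipschitz_def)
  then show ?thesis
  proof (rule bounded_range_if_lipschitz_gauge[where K = "2 * D"])
    show "0 \<le> hat_dist p q" for p q :: "(nat \<Rightarrow> 'm) \<times> (nat \<Rightarrow> 'm)"
      using seq_dist_nonneg[OF D, of "fst p" "fst q"] seq_dist_nonneg[OF D, of "snd p" "snd q"]
      by (simp add: hat_dist_def)
    show "hat_dist p q \<le> 2 * D" for p q :: "(nat \<Rightarrow> 'm) \<times> (nat \<Rightarrow> 'm)"
      using add_mono[OF seq_dist_le[OF D] seq_dist_le[OF D]] by (simp add: hat_dist_def)
  qed
qed

lemma scons_0 [simp]: "scons a x 0 = a"
  by (simp add: scons_def)

lemma shift_scons [simp]: "shift (scons a x) = x"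
  by (simp add: scons_def shift_def)

lemma scons_shift [simp]: "scons (y 0) (shift y) = y"
  by (rule ext) (simp add: scons_def shift_def split: nat.split)

definition sigma_hat_inv :: "(nat \<Rightarrow> 'm) \<times> (nat \<Rightarrow> 'm) \<Rightarrow> (nat \<Rightarrow> 'm) \<times> (nat \<Rightarrow> 'm)" where
  "sigma_hat_inv p = (shift (fst p), scons (fst p 0) (snd p))"

lemma sigma_hat_inv_sigma_hat [simp]: "sigma_hat_inv (sigma_hat p) = p"
  by (simp add: sigma_hat_inv_def sigma_hat_def)

lemma continuous_on_scons:
  fixes g :: "'a::topological_space \<Rightarrow> 'b::topological_space"
  assumes "continuous_on S g" "continuous_on S h"
  shows "continuous_on S (\<lambda>p. scons (g p) (h p))"
proof (rule continuous_on_coordinatewise_then_product)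
  show "continuous_on S (\<lambda>p. scons (g p) (h p) n)" for n
    using assms continuous_on_product_then_coordinatewise[OF assms(2)]
    by (cases n) (simp_all add: scons_def)
qed

lemma continuous_on_shift:
  fixes h :: "'a::topological_space \<Rightarrow> nat \<Rightarrow> 'b::topological_space"
  assumes "continuous_on S h"
  shows "continuous_on S (\<lambda>p. shift (h p))"
  unfolding shift_def
  by (rule continuous_on_coordinatewise_then_product)
    (rule continuous_on_product_then_coordinatewise[OF assms])

lemma continuous_on_sigma_hat:
  "continuous_on UNIV (sigma_hat :: (nat \<Rightarrow> 'm::topological_space) \<times> (nat \<Rightarrow> 'm) \<Rightarrow> _)"
proof -
  have "continuous_on UNIV (\<lambda>p::(nat \<Rightarrow> 'm) \<times> (nat \<Rightarrow> 'm). snd p 0)"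
    by (rule continuous_on_product_then_coordinatewise[OF continuous_on_snd[OF continuous_on_id]])
  then show ?thesis
    unfolding sigma_hat_def
    by (intro continuous_on_Pair continuous_on_scons continuous_on_shift
        continuous_on_fst continuous_on_snd continuous_on_id)
qed

lemma continuous_on_sigma_hat_inv:
  "continuous_on UNIV (sigma_hat_inv :: (nat \<Rightarrow> 'm::topological_space) \<times> (nat \<Rightarrow> 'm) \<Rightarrow> _)"
proof -
  have "continuous_on UNIV (\<lambda>p::(nat \<Rightarrow> 'm) \<times> (nat \<Rightarrow> 'm). fst p 0)"
    by (rule continuous_on_product_then_coordinatewise[OF continuous_on_fst[OF continuous_on_id]])
  then show ?thesis
    unfolding sigma_hat_inv_def
    by (intro continuous_on_Pair continuous_on_scons continuous_on_shift
        continuous_on_fst continuous_on_snd continuous_on_id)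
qed

lemma measurable_borel_if_continuous:
  "sets M = sets borel \<Longrightarrow> continuous_on UNIV f \<Longrightarrow> f \<in> M \<rightarrow>\<^sub>M borel"
  using borel_measurable_continuous_onI measurable_cong_sets by blast

lemma integral_distr_continuous:
  fixes f :: "'b::topological_space \<Rightarrow> real"
  assumes "sets M = sets borel" "continuous_on UNIV g" "continuous_on UNIV f"
  shows "(\<integral>y. f y \<partial>distr M borel g) = (\<integral>x. f (g x) \<partial>M)"
  using assms by (intro integral_distr measurable_borel_if_continuous) simp_all

lemma integrable_continuous_comp:
  fixes f :: "'b::topological_space \<Rightarrow> real"
  assumes "finite_measure M" "sets M = sets borel" "continuous_on UNIV f" "bounded (range f)"
    and "continuous_on UNIV g"
  shows "integrable M (\<lambda>x. f (g x))"
proof -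
  obtain B where "\<And>y. \<bar>f y\<bar> \<le> B"
    using \<open>bounded (range f)\<close> by (auto simp: bounded_real)
  moreover have "(\<lambda>x. f (g x)) \<in> borel_measurable M"
    using assms by (intro measurable_borel_if_continuous continuous_on_compose2[OF assms(3,5)]) simp_all
  ultimately show ?thesis
    by (intro finite_measure.integrable_const_bound[OF assms(1), where B = B]) simp_all
qed

lemma integral_comp_left_inverse:
  fixes f :: "'a::topological_space \<Rightarrow> 'b::{banach, second_countable_topology}"
  assumes "T \<in> M \<rightarrow>\<^sub>M borel" "distr M borel T = M" "\<And>x. S (T x) = x"
    and "(\<lambda>x. f (S x)) \<in> borel_measurable borel"
  shows "(\<integral>x. f (S x) \<partial>M) = (\<integral>x. f x \<partial>M)"
proof -
  have "(\<integral>x. f (S x) \<partial>M) = (\<integral>x. f (S x) \<partial>distr M borel T)"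
    using assms(2) by simp
  also have "\<dots> = (\<integral>x. f (S (T x)) \<partial>M)"
    by (rule integral_distr[OF assms(1,4)])
  finally show ?thesis
    using assms(3) by simp
qed

lemma invariant_extensionD:
  assumes "invariant_extension \<mu> \<mu>h"
  shows "finite_measure \<mu>h" "sets \<mu>h = sets borel" "distr \<mu>h borel sigma_hat = \<mu>h"
    and "distr \<mu>h borel snd = \<mu>"
  using assms by (auto simp: invariant_extension_def intro: prob_space.finite_measure)

lemma integral_sigma_hat_inv:
  fixes f :: "(nat \<Rightarrow> 'm::metric_space) \<times> (nat \<Rightarrow> 'm) \<Rightarrow> real"
  assumes "invariant_extension \<mu> \<mu>h" "continuous_on UNIV f"
  shows "(\<integral>p. f (sigma_hat_inv p) \<partial>\<mu>h) = (\<integral>p. f p \<partial>\<mu>h)"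
proof (rule integral_comp_left_inverse)
  show "sigma_hat \<in> \<mu>h \<rightarrow>\<^sub>M borel"
    by (rule measurable_borel_if_continuous[OF invariant_extensionD(2)[OF assms(1)]
          continuous_on_sigma_hat])
  show "distr \<mu>h borel sigma_hat = \<mu>h"
    by (rule invariant_extensionD(3)[OF assms(1)])
  show "(\<lambda>p. f (sigma_hat_inv p)) \<in> borel_measurable borel"
    by (intro borel_measurable_continuous_onI
        continuous_on_compose2[OF assms(2) continuous_on_sigma_hat_inv subset_UNIV])
qed simp

lemma involution_kernelD:
  "involution_kernel A W Am \<Longrightarrow> Am y = A (scons (y 0) x) + W (shift y, scons (y 0) x) - W (y, x)"
  by (simp add: involution_kernel_def)

lemma involution_kernel_fst:
  assumes "involution_kernel A W Am"
  shows "Am (fst p) = A (snd (sigma_hat_inv p)) + W (sigma_hat_inv p) - W p"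
  using involution_kernelD[OF assms, of "fst p" "snd p"] by (simp add: sigma_hat_inv_def)

lemma involution_kernel_snd_sigma_hat_inv:
  assumes "involution_kernel A W Am"
  shows "Am (snd (sigma_hat_inv p)) =
    A (fst p) + W (prod.swap p) - W (prod.swap (sigma_hat_inv p))"
proof -
  obtain y x where "p = (y, x)" by fastforce
  then show ?thesis
    using involution_kernelD[OF assms, of "scons (y 0) x" "shift y"]
    by (simp add: sigma_hat_inv_def)
qed

context
  fixes A :: "(nat \<Rightarrow> 'm::metric_space) \<Rightarrow> real"
    and W :: "(nat \<Rightarrow> 'm) \<times> (nat \<Rightarrow> 'm) \<Rightarrow> real"
    and Am :: "(nat \<Rightarrow> 'm) \<Rightarrow> real"
  assumes kernel: "involution_kernel A W Am"
    and cont_A: "continuous_on UNIV A" and bounded_A: "bounded (range A)"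
    and cont_W: "continuous_on UNIV W" and bounded_W: "bounded (range W)"
begin

lemma involution_kernel_continuous: "continuous_on UNIV Am"
proof -
  fix c :: "nat \<Rightarrow> 'm"
  have Am: "Am = (\<lambda>y. A (scons (y 0) c) + W (shift y, scons (y 0) c) - W (y, c))"
    using involution_kernelD[OF kernel] by blast
  have scons: "continuous_on UNIV (\<lambda>y::nat \<Rightarrow> 'm. scons (y 0) c)"
    by (rule continuous_on_scons[OF continuous_on_product_coordinates continuous_on_const])
  show ?thesis
    unfolding Am
    by (intro continuous_on_diff continuous_on_add
        continuous_on_compose2[OF cont_A scons subset_UNIV]
        continuous_on_compose2[OF cont_W _ subset_UNIV] continuous_on_Pair
        continuous_on_shift scons continuous_on_id continuous_on_const)
qed

lemma integral_involution_kernel_fst: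
  assumes ext: "invariant_extension \<mu> \<mu>h"
  shows "(\<integral>y. Am y \<partial>distr \<mu>h borel fst) = (\<integral>x. A x \<partial>\<mu>)"
proof -
  note sets = invariant_extensionD(2)[OF ext] and marginal = invariant_extensionD(4)[OF ext]
  note integrable = integrable_continuous_comp[OF invariant_extensionD(1)[OF ext] sets]
  note comp = continuous_on_compose2[OF _ _ subset_UNIV]
  note fst = continuous_on_fst[OF continuous_on_id] and snd = continuous_on_snd[OF continuous_on_id]
  have "(\<integral>y. Am y \<partial>distr \<mu>h borel fst) = (\<integral>p. Am (fst p) \<partial>\<mu>h)"
    by (rule integral_distr_continuous[OF sets fst involution_kernel_continuous])
  also have "\<dots> = (\<integral>p. A (snd (sigma_hat_inv p)) + W (sigma_hat_inv p) - W p \<partial>\<mu>h)"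
    using involution_kernel_fst[OF kernel] by simp
  also have "\<dots> = (\<integral>p. A (snd (sigma_hat_inv p)) \<partial>\<mu>h) + (\<integral>p. W (sigma_hat_inv p) \<partial>\<mu>h)
      - (\<integral>p. W p \<partial>\<mu>h)"
    using integrable[OF cont_A bounded_A comp[OF snd continuous_on_sigma_hat_inv]]
      integrable[OF cont_W bounded_W continuous_on_sigma_hat_inv]
      integrable[OF cont_W bounded_W continuous_on_id]
    by simp
  also have "\<dots> = (\<integral>p. A (snd p) \<partial>\<mu>h)"
    using integral_sigma_hat_inv[OF ext comp[OF cont_A snd]] integral_sigma_hat_inv[OF ext cont_W]
    by simp
  also have "\<dots> = (\<integral>x. A x \<partial>\<mu>)"
    using integral_distr_continuous[OF sets snd cont_A] marginal by simp
  finally show ?thesis .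
qed

lemma integral_involution_kernel_snd:
  assumes ext: "invariant_extension \<mu> \<mu>h"
  shows "(\<integral>x. Am x \<partial>\<mu>) = (\<integral>y. A y \<partial>distr \<mu>h borel fst)"
proof -
  note sets = invariant_extensionD(2)[OF ext] and marginal = invariant_extensionD(4)[OF ext]
  note integrable = integrable_continuous_comp[OF invariant_extensionD(1)[OF ext] sets]
  note comp = continuous_on_compose2[OF _ _ subset_UNIV]
  note fst = continuous_on_fst[OF continuous_on_id] and snd = continuous_on_snd[OF continuous_on_id]
  note cont_Am = involution_kernel_continuous
  have "(\<integral>x. Am x \<partial>\<mu>) = (\<integral>p. Am (snd p) \<partial>\<mu>h)"
    using integral_distr_continuous[OF sets snd cont_Am] marginal by simp
  also have "\<dots> = (\<integral>p. Am (snd (sigma_hat_inv p)) \<partial>\<mu>h)"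
    using integral_sigma_hat_inv[OF ext comp[OF cont_Am snd]] by simp
  also have "\<dots> = (\<integral>p. A (fst p) + W (prod.swap p) - W (prod.swap (sigma_hat_inv p)) \<partial>\<mu>h)"
    using involution_kernel_snd_sigma_hat_inv[OF kernel] by simp
  also have "\<dots> = (\<integral>p. A (fst p) \<partial>\<mu>h) + (\<integral>p. W (prod.swap p) \<partial>\<mu>h)
      - (\<integral>p. W (prod.swap (sigma_hat_inv p)) \<partial>\<mu>h)"
    using integrable[OF cont_A bounded_A fst] integrable[OF cont_W bounded_W continuous_on_swap]
      integrable[OF cont_W bounded_W comp[OF continuous_on_swap continuous_on_sigma_hat_inv]]
    by simp
  also have "\<dots> = (\<integral>p. A (fst p) \<partial>\<mu>h)"
    using integral_sigma_hat_inv[OF ext comp[OF cont_W continuous_on_swap]] by simp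
  also have "\<dots> = (\<integral>y. A y \<partial>distr \<mu>h borel fst)"
    using integral_distr_continuous[OF sets fst cont_A] by simp
  finally show ?thesis .
qed

end

theorem mainTheorem13:
  fixes A :: "(nat \<Rightarrow> 'm::metric_space) \<Rightarrow> real"
    and W :: "(nat \<Rightarrow> 'm) \<times> (nat \<Rightarrow> 'm) \<Rightarrow> real"
    and Am :: "(nat \<Rightarrow> 'm) \<Rightarrow> real"
    and \<mu> :: "(nat \<Rightarrow> 'm) measure"
    and \<mu>h :: "((nat \<Rightarrow> 'm) \<times> (nat \<Rightarrow> 'm)) measure"
  assumes "compact (UNIV :: 'm set)"
    and "seq_lipschitz A"
    and "involution_kernel A W Am"
    and "equilibrium_prob \<mu>"
    and "invariant_extension \<mu> \<mu>h"
  shows "(\<integral>x. A x \<partial>\<mu>) = (\<integral>y. Am y \<partial>(distr \<mu>h borel fst)) \<and>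
         (\<integral>x. (Am \<circ> inv theta) x \<partial>\<mu>) = (\<integral>y. (A \<circ> theta) y \<partial>(distr \<mu>h borel fst))"
proof -
  have D: "\<And>a b::'m. dist a b \<le> diameter (UNIV :: 'm set)"
    using compact_imp_bounded[OF assms(1)] diameter_bounded_bound by blast
  have W: "hat_lipschitz W"
    using assms(3) by (simp add: involution_kernel_def)
  note kernel_facts = assms(3)
    seq_lipschitz_continuous[OF D assms(2)] seq_lipschitz_bounded[OF D assms(2)]
    hat_lipschitz_continuous[OF D W] hat_lipschitz_bounded[OF D W]
  have "theta = (id :: (nat \<Rightarrow> 'm) \<Rightarrow> _)"
    by (rule ext) (simp add: theta_def)
  then have "Am \<circ> inv theta = Am" "A \<circ> theta = A"
    by (simp_all add: inv_id)
  then show ?thesis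
    using integral_involution_kernel_fst[OF kernel_facts assms(5)]
      integral_involution_kernel_snd[OF kernel_facts assms(5)]
    by (simp only:)
qed

end
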